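(* Let $F:L_n\to\Delta K$ be a $2$-filtration and let $p:\{0<1<\dots<2n\}\to L_n$ be a path. Define $f:L_n\to\{0,\dots,2n\}$ by $f(a)=\min\{x: a\le p(x)\}$, and let $G=F\circ p$. Then for any $x\le y$ in $\{0,\dots,2n\}$ and every dimension $q$, \[\mathsf{Dgm}_qG[x,y]=\sum_{[a,b]\in\mathsf{Int}\,L_n,\ f(a)=x,\ f(b)=y}\mathsf{Dgm}_qF[a,b].\]
   Context: $K$ is a finite simplicial complex, coefficients in a field. A path is a monotone injective map $p$ from the chain $\{0<\dots<2n\}$ to $L_n=\{0,\dots,n\}^2$ (product order) with $p(0)=(0,0)$, $p(2n)=(n,n)$, consecutive grades differing by $1$ in exactly one coordinate. For a finite poset $P$ with least element $\bot$ and greatest $\top$: $\mathsf{Int}\,P=\{[a,b]:a\le b\}$ with $[a,b]\le[c,d]$ iff $a\le c$, $b\le d$; a $P$-filtration is a monotone map $F$ from $P$ to subcomplexes of $K$ with $F(\bot)=\emptyset$, $F(\top)=K$; $ZB_qF[a,b]=\dim(Z_qF(a)\cap B_qF(b))$ for $b\ne\top$ and $\dim Z_qF(a)$ for $b=\top$ ($Z_q,B_q$ = $q$-cycles, $q$-boundaries); $\mathsf{Dgm}_qF$ is the unique function on $\mathsf{Int}\,P$ with $ZB_qF[c,d]=\sum_{[a,b]\le[c,d]}\mathsf{Dgm}_qF[a,b]$. A $2$-filtration is an $L_n$-filtration; $G$ is a $\{0,\dots,2n\}$-filtration. *)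

theory Defs
  imports Main "HOL.Vector_Spaces" "HOL-Library.Function_Algebras"
begin

definition simplicial_complex :: "'v set set \<Rightarrow> bool" where
  "simplicial_complex K \<longleftrightarrow> finite K \<and>
     (\<forall>\<sigma>\<in>K. finite \<sigma> \<and> \<sigma> \<noteq> {}) \<and>
     (\<forall>\<sigma>\<in>K. \<forall>\<tau>. \<tau> \<subseteq> \<sigma> \<and> \<tau> \<noteq> {} \<longrightarrow> \<tau> \<in> K)"

definition subcomplex :: "'v set set \<Rightarrow> 'v set set \<Rightarrow> bool" where
  "subcomplex L K \<longleftrightarrow> L \<subseteq> K \<and> simplicial_complex L"

text \<open>A chain is a coefficient function on simplices; q-simplices have q+1 vertices.
  Orientation is induced by the linear order on vertices.\<close>

definition chains :: "'v set set \<Rightarrow> nat \<Rightarrow> ('v set \<Rightarrow> 'k::field) set" where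
  "chains X q = {c. \<forall>\<sigma>. c \<sigma> \<noteq> 0 \<longrightarrow> \<sigma> \<in> X \<and> card \<sigma> = Suc q}"

definition bd :: "'v::linorder set set \<Rightarrow> ('v set \<Rightarrow> 'k::field) \<Rightarrow> 'v set \<Rightarrow> 'k" where
  "bd K c \<tau> = (if \<tau> = {} then 0 else
     (\<Sum>\<sigma>\<in>K. if \<tau> \<subset> \<sigma> \<and> card \<sigma> = Suc (card \<tau>)
             then (- 1) ^ card {u\<in>\<tau>. u < the_elem (\<sigma> - \<tau>)} * c \<sigma> else 0))"

definition cycles :: "'v::linorder set set \<Rightarrow> 'v set set \<Rightarrow> nat \<Rightarrow> ('v set \<Rightarrow> 'k::field) set" where
  "cycles K X q = {c \<in> chains X q. bd K c = 0}"

definition boundaries :: "'v::linorder set set \<Rightarrow> 'v set set \<Rightarrow> nat \<Rightarrow> ('v set \<Rightarrow> 'k::field) set" where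
  "boundaries K X q = bd K ` chains X (Suc q)"

definition sdim :: "('v set \<Rightarrow> 'k::field) set \<Rightarrow> nat" where
  "sdim S = vector_space.dim (\<lambda>r (c::'v set \<Rightarrow> 'k) x. r * c x) S"

definition filtration ::
  "'p set \<Rightarrow> ('p \<Rightarrow> 'p \<Rightarrow> bool) \<Rightarrow> 'p \<Rightarrow> 'p \<Rightarrow> 'v set set \<Rightarrow> ('p \<Rightarrow> 'v set set) \<Rightarrow> bool" where
  "filtration P le pbot ptop K F \<longleftrightarrow>
     (\<forall>a\<in>P. subcomplex (F a) K) \<and>
     (\<forall>a\<in>P. \<forall>b\<in>P. le a b \<longrightarrow> F a \<subseteq> F b) \<and>
     F pbot = {} \<and> F ptop = K"

definition ZB :: "'k::field itself \<Rightarrow> 'v::linorder set set \<Rightarrow> 'p \<Rightarrow> ('p \<Rightarrow> 'v set set)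
                  \<Rightarrow> nat \<Rightarrow> 'p \<Rightarrow> 'p \<Rightarrow> nat" where
  "ZB (_::'k itself) K ptop F q a b =
     (if b \<noteq> ptop
      then sdim (cycles K (F a) q \<inter> boundaries K (F b) q :: ('v set \<Rightarrow> 'k) set)
      else sdim (cycles K (F a) q :: ('v set \<Rightarrow> 'k) set))"

definition intervals :: "'p set \<Rightarrow> ('p \<Rightarrow> 'p \<Rightarrow> bool) \<Rightarrow> ('p \<times> 'p) set" where
  "intervals P le = {(a, b). a \<in> P \<and> b \<in> P \<and> le a b}"

definition Dgm :: "'k::field itself \<Rightarrow> 'v::linorder set set \<Rightarrow> 'p set \<Rightarrow> ('p \<Rightarrow> 'p \<Rightarrow> bool) \<Rightarrow> 'p
                   \<Rightarrow> ('p \<Rightarrow> 'v set set) \<Rightarrow> nat \<Rightarrow> 'p \<times> 'p \<Rightarrow> int" where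
  "Dgm k K P le ptop F q = (THE D.
     (\<forall>(c, d)\<in>intervals P le.
        int (ZB k K ptop F q c d) =
        (\<Sum>(a, b)\<in>{(a, b)\<in>intervals P le. le a c \<and> le b d}. D (a, b))) \<and>
     (\<forall>I. I \<notin> intervals P le \<longrightarrow> D I = 0))"

definition grid :: "nat \<Rightarrow> (nat \<times> nat) set" where
  "grid n = {0..n} \<times> {0..n}"

definition grid_le :: "nat \<times> nat \<Rightarrow> nat \<times> nat \<Rightarrow> bool" where
  "grid_le a b \<longleftrightarrow> fst a \<le> fst b \<and> snd a \<le> snd b"

definition is_path :: "nat \<Rightarrow> (nat \<Rightarrow> nat \<times> nat) \<Rightarrow> bool" where
  "is_path n p \<longleftrightarrow>
     p ` {0..2*n} \<subseteq> grid n \<and>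
     (\<forall>i\<in>{0..2*n}. \<forall>j\<in>{0..2*n}. i \<le> j \<longrightarrow> grid_le (p i) (p j)) \<and>
     inj_on p {0..2*n} \<and>
     p 0 = (0, 0) \<and> p (2*n) = (n, n) \<and>
     (\<forall>i<2*n. p (Suc i) = (Suc (fst (p i)), snd (p i)) \<or> p (Suc i) = (fst (p i), Suc (snd (p i))))"

end

theory Submission
  imports Defs
begin

(* Dgm over a finite poset P is the Moebius inverse of ZB on the poset of intervals of P.
   The function f is the lower adjoint of the path p: f a <= z iff a <= p z.  Hence an
   interval [a, b] of L_n lies below [p c, p d] exactly when [f a, f b] lies below [c, d],
   so pushing Dgm F forward along f gives a function whose downward sums are
   ZB F [p c, p d] = ZB G [c, d] (p reaches the top (n, n) only at 2n).  Uniqueness of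
   Moebius inversion identifies this push-forward with Dgm G. *)

definition mobius_inverse :: "'a set \<Rightarrow> ('a \<Rightarrow> 'a \<Rightarrow> bool) \<Rightarrow> ('a \<Rightarrow> int) \<Rightarrow> ('a \<Rightarrow> int) \<Rightarrow> bool" where
  "mobius_inverse Q R Z D \<longleftrightarrow> (\<forall>c\<in>Q. Z c = sum D {a\<in>Q. R a c}) \<and> (\<forall>a. a \<notin> Q \<longrightarrow> D a = 0)"

lemma mobius_inverse_exists:
  fixes h :: "'a \<Rightarrow> nat"
  assumes "finite Q" and refl: "\<And>c. c \<in> Q \<Longrightarrow> R c c"
    and rank: "\<And>a c. a \<in> Q \<Longrightarrow> c \<in> Q \<Longrightarrow> R a c \<Longrightarrow> a \<noteq> c \<Longrightarrow> h a < h c"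
  shows "\<exists>D. mobius_inverse Q R Z D"
proof -
  have "S \<subseteq> Q \<Longrightarrow> \<exists>D. mobius_inverse S R Z D" if "finite S" for S
    using that
  proof (induction S rule: finite_ranking_induct[where f = h])
    case empty
    show ?case by (rule exI[of _ "\<lambda>_. 0"]) (simp add: mobius_inverse_def)
  next
    case (insert m S)
    then obtain D0 where D0: "mobius_inverse S R Z D0" by auto
    show ?case
    proof (cases "m \<in> S")
      case True
      then show ?thesis using D0 by (auto simp: insert_absorb)
    next
      case m_new: False
      \<comment> \<open>m has maximal rank, so nothing in S lies above it: only the value at m needs fixing\<close>
      define D where "D = D0(m := Z m - sum D0 {a\<in>S. R a m})"
      have D_away: "sum D A = sum D0 A" if "m \<notin> A" for A
        using that unfolding D_def by (intro sum.cong) auto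
      have not_above: "\<not> R m c" if "c \<in> S" for c
        using rank[of m c] insert.hyps(2)[OF that] insert.prems m_new that by force
      have "Z c = sum D {a \<in> insert m S. R a c}" if "c \<in> insert m S" for c
      proof (cases "c = m")
        case True
        have "{a \<in> insert m S. R a m} = insert m {a\<in>S. R a m}"
          using refl insert.prems by auto
        then show ?thesis
          using True m_new insert.hyps(1) D_away[of "{a\<in>S. R a m}"] by (simp add: D_def)
      next
        case False
        then have "{a \<in> insert m S. R a c} = {a\<in>S. R a c}" "c \<in> S"
          using not_above that by auto
        then show ?thesis
          using D0 m_new D_away[of "{a\<in>S. R a c}"] by (simp add: mobius_inverse_def)
      qed
      moreover have "D a = 0" if "a \<notin> insert m S" for a
        using D0 that by (simp add: D_def mobius_inverse_def)
      ultimately show ?thesis unfolding mobius_inverse_def by blast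
    qed
  qed
  then show ?thesis using assms(1) by blast
qed

lemma mobius_inverse_unique:
  fixes h :: "'a \<Rightarrow> nat"
  assumes "finite Q" and refl: "\<And>c. c \<in> Q \<Longrightarrow> R c c"
    and rank: "\<And>a c. a \<in> Q \<Longrightarrow> c \<in> Q \<Longrightarrow> R a c \<Longrightarrow> a \<noteq> c \<Longrightarrow> h a < h c"
    and D1: "mobius_inverse Q R Z D1" and D2: "mobius_inverse Q R Z D2"
  shows "D1 = D2"
proof
  have "D1 c = D2 c" if "c \<in> Q" for c
    using that
  proof (induction "h c" arbitrary: c rule: less_induct)
    case less
    define S where "S = {a\<in>Q. R a c}"
    have "finite S" "c \<in> S" using assms(1) refl less.prems by (auto simp: S_def)
    have "sum D1 S = sum D2 S"
      using D1 D2 less.prems by (simp add: mobius_inverse_def S_def)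
    moreover have "sum D1 (S - {c}) = sum D2 (S - {c})"
      using less rank by (intro sum.cong) (auto simp: S_def)
    ultimately show ?case
      using sum.remove[OF \<open>finite S\<close> \<open>c \<in> S\<close>] by (metis add_right_cancel)
  qed
  then show "D1 c = D2 c" for c
    using D1 D2 by (cases "c \<in> Q") (auto simp: mobius_inverse_def)
qed

definition finite_ranked_order :: "'p set \<Rightarrow> ('p \<Rightarrow> 'p \<Rightarrow> bool) \<Rightarrow> ('p \<Rightarrow> nat) \<Rightarrow> bool" where
  "finite_ranked_order P le h \<longleftrightarrow> finite P \<and> (\<forall>a\<in>P. le a a) \<and>
     (\<forall>a\<in>P. \<forall>b\<in>P. \<forall>c\<in>P. le a b \<longrightarrow> le b c \<longrightarrow> le a c) \<and>
     (\<forall>a\<in>P. \<forall>b\<in>P. le a b \<longrightarrow> a \<noteq> b \<longrightarrow> h a < h b)"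

definition interval_le :: "('p \<Rightarrow> 'p \<Rightarrow> bool) \<Rightarrow> 'p \<times> 'p \<Rightarrow> 'p \<times> 'p \<Rightarrow> bool" where
  "interval_le le I J \<longleftrightarrow> le (fst I) (fst J) \<and> le (snd I) (snd J)"

lemma finite_ranked_orderD:
  assumes "finite_ranked_order P le h"
  shows finite_ranked_order_finite: "finite P"
    and finite_ranked_order_refl: "a \<in> P \<Longrightarrow> le a a"
    and finite_ranked_order_trans: "\<lbrakk>a \<in> P; b \<in> P; c \<in> P; le a b; le b c\<rbrakk> \<Longrightarrow> le a c"
    and finite_ranked_order_rank_less: "\<lbrakk>a \<in> P; b \<in> P; le a b; a \<noteq> b\<rbrakk> \<Longrightarrow> h a < h b"
  using assms unfolding finite_ranked_order_def by blast+

lemma finite_ranked_order_rank_mono: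
  "\<lbrakk>finite_ranked_order P le h; a \<in> P; b \<in> P; le a b\<rbrakk> \<Longrightarrow> h a \<le> h b"
  by (cases "a = b") (auto dest: finite_ranked_order_rank_less)

lemma finite_intervals: "finite P \<Longrightarrow> finite (intervals P le)"
  unfolding intervals_def by (rule finite_subset[of _ "P \<times> P"]) auto

lemma ex1_mobius_inverse_intervals:
  assumes P: "finite_ranked_order P le h"
  shows "\<exists>!D. mobius_inverse (intervals P le) (interval_le le) Z D"
proof -
  let ?h = "\<lambda>I. h (fst I) + h (snd I)"
  have fin: "finite (intervals P le)"
    using finite_intervals[OF finite_ranked_order_finite[OF P]] .
  have refl: "interval_le le I I" if "I \<in> intervals P le" for I
    using that finite_ranked_order_refl[OF P] by (auto simp: intervals_def interval_le_def)
  have rank: "?h I < ?h J"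
    if "I \<in> intervals P le" "J \<in> intervals P le" "interval_le le I J" "I \<noteq> J" for I J
  proof -
    have "fst I \<noteq> fst J \<or> snd I \<noteq> snd J" using \<open>I \<noteq> J\<close> by (simp add: prod_eq_iff)
    moreover have "fst I \<in> P" "snd I \<in> P" "fst J \<in> P" "snd J \<in> P"
      "le (fst I) (fst J)" "le (snd I) (snd J)"
      using that by (auto simp: intervals_def interval_le_def)
    ultimately show ?thesis
      using finite_ranked_order_rank_less[OF P] finite_ranked_order_rank_mono[OF P]
      by (meson add_le_less_mono add_less_le_mono)
  qed
  show ?thesis
    using mobius_inverse_exists[where R = "interval_le le" and h = ?h, OF fin refl rank]
      mobius_inverse_unique[where R = "interval_le le" and h = ?h, OF fin refl rank] by blast
qed

lemma Dgm_eq_The_mobius_inverse: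
  "Dgm k K P le ptop F q =
     (THE D. mobius_inverse (intervals P le) (interval_le le) (\<lambda>(c, d). int (ZB k K ptop F q c d)) D)"
proof -
  have "{(a, b) \<in> intervals P le. le a c \<and> le b d} = {I \<in> intervals P le. interval_le le I (c, d)}"
    for c d by (auto simp: interval_le_def)
  then show ?thesis
    unfolding Dgm_def mobius_inverse_def by (simp add: split_def)
qed

lemma Dgm_mobius_inverse:
  assumes "finite_ranked_order P le h"
  shows "mobius_inverse (intervals P le) (interval_le le) (\<lambda>(c, d). int (ZB k K ptop F q c d))
           (Dgm k K P le ptop F q)"
  unfolding Dgm_eq_The_mobius_inverse by (rule theI'[OF ex1_mobius_inverse_intervals[OF assms]])

lemma Dgm_unique:
  assumes "finite_ranked_order P le h"
    and "mobius_inverse (intervals P le) (interval_le le) (\<lambda>(c, d). int (ZB k K ptop F q c d)) D"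
  shows "Dgm k K P le ptop F q = D"
  unfolding Dgm_eq_The_mobius_inverse
  by (rule the1_equality[OF ex1_mobius_inverse_intervals[OF assms(1)]]) (rule assms(2))

definition galois_connection :: "'p set \<Rightarrow> ('p \<Rightarrow> 'p \<Rightarrow> bool) \<Rightarrow> 'q set \<Rightarrow>
    ('q \<Rightarrow> 'q \<Rightarrow> bool) \<Rightarrow> ('p \<Rightarrow> 'q) \<Rightarrow> ('q \<Rightarrow> 'p) \<Rightarrow> bool" where
  "galois_connection P le Q le' f g \<longleftrightarrow>
     f ` P \<subseteq> Q \<and> g ` Q \<subseteq> P \<and> (\<forall>a\<in>P. \<forall>z\<in>Q. le' (f a) z \<longleftrightarrow> le a (g z))"

lemma galois_connectionD:
  assumes "galois_connection P le Q le' f g"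
  shows galois_connection_lower_in: "a \<in> P \<Longrightarrow> f a \<in> Q"
    and galois_connection_upper_in: "z \<in> Q \<Longrightarrow> g z \<in> P"
    and galois_connection_adjoint: "\<lbrakk>a \<in> P; z \<in> Q\<rbrakk> \<Longrightarrow> le' (f a) z \<longleftrightarrow> le a (g z)"
  using assms unfolding galois_connection_def by auto

lemma galois_connection_lower_mono:
  assumes gc: "galois_connection P le Q le' f g"
    and refl: "\<And>z. z \<in> Q \<Longrightarrow> le' z z"
    and trans: "\<And>a b c. \<lbrakk>a \<in> P; b \<in> P; c \<in> P; le a b; le b c\<rbrakk> \<Longrightarrow> le a c"
    and ab: "a \<in> P" "b \<in> P" "le a b"
  shows "le' (f a) (f b)"
proof -
  have fb: "f b \<in> Q" and gfb: "g (f b) \<in> P"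
    using ab gc by (simp_all add: galois_connection_lower_in galois_connection_upper_in)
  have "le b (g (f b))"
    using galois_connection_adjoint[OF gc ab(2) fb] refl[OF fb] by simp
  then have "le a (g (f b))" using trans[OF ab(1,2) gfb ab(3)] by simp
  then show ?thesis using galois_connection_adjoint[OF gc ab(1) fb] by simp
qed

lemma galois_connection_upper_mono:
  assumes gc: "galois_connection P le Q le' f g"
    and refl: "\<And>a. a \<in> P \<Longrightarrow> le a a"
    and trans: "\<And>x y z. \<lbrakk>x \<in> Q; y \<in> Q; z \<in> Q; le' x y; le' y z\<rbrakk> \<Longrightarrow> le' x z"
    and zz': "z \<in> Q" "z' \<in> Q" "le' z z'"
  shows "le (g z) (g z')"
proof -
  have gz: "g z \<in> P" and fgz: "f (g z) \<in> Q"
    using zz' gc by (simp_all add: galois_connection_lower_in galois_connection_upper_in)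
  have "le' (f (g z)) z"
    using galois_connection_adjoint[OF gc gz zz'(1)] refl[OF gz] by simp
  then have "le' (f (g z)) z'" using trans[OF fgz zz'(1,2) _ zz'(3)] by simp
  then show ?thesis using galois_connection_adjoint[OF gc gz zz'(2)] by simp
qed

lemma mobius_inverse_intervals_pushforward:
  assumes "finite P" "finite Q" and gc: "galois_connection P le Q le' f g"
    and f_mono: "\<And>a b. \<lbrakk>a \<in> P; b \<in> P; le a b\<rbrakk> \<Longrightarrow> le' (f a) (f b)"
    and g_mono: "\<And>z z'. \<lbrakk>z \<in> Q; z' \<in> Q; le' z z'\<rbrakk> \<Longrightarrow> le (g z) (g z')"
    and D: "mobius_inverse (intervals P le) (interval_le le) Z D"
    and Z': "\<And>c d. (c, d) \<in> intervals Q le' \<Longrightarrow> Z' (c, d) = Z (g c, g d)"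
  shows "mobius_inverse (intervals Q le') (interval_le le') Z'
           (\<lambda>I. sum D {J \<in> intervals P le. map_prod f f J = I})"
proof -
  let ?D' = "\<lambda>I. sum D {J \<in> intervals P le. map_prod f f J = I}"
  have f_intervals: "map_prod f f J \<in> intervals Q le'" if "J \<in> intervals P le" for J
    using that f_mono galois_connection_lower_in[OF gc] by (auto simp: intervals_def)
  have g_intervals: "(g c, g d) \<in> intervals P le" if "(c, d) \<in> intervals Q le'" for c d
    using that g_mono galois_connection_upper_in[OF gc] by (auto simp: intervals_def)
  have adjoint: "interval_le le' (map_prod f f J) (c, d) \<longleftrightarrow> interval_le le J (g c, g d)"
    if "J \<in> intervals P le" "(c, d) \<in> intervals Q le'" for J c d
    using that galois_connection_adjoint[OF gc] by (auto simp: intervals_def interval_le_def)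
  have "Z' I = sum ?D' {I' \<in> intervals Q le'. interval_le le' I' I}"
    if "I \<in> intervals Q le'" for I
  proof -
    obtain c d where I: "I = (c, d)" by force
    with that have cd: "(c, d) \<in> intervals Q le'" by simp
    define S where "S = {J \<in> intervals P le. interval_le le J (g c, g d)}"
    define T where "T = {I \<in> intervals Q le'. interval_le le' I (c, d)}"
    have "finite S" "finite T"
      using finite_intervals[OF \<open>finite P\<close>] finite_intervals[OF \<open>finite Q\<close>]
      by (simp_all add: S_def T_def)
    have "sum ?D' T = (\<Sum>I\<in>T. sum D {J \<in> S. map_prod f f J = I})"
      using adjoint[OF _ cd] by (intro sum.cong) (auto simp: S_def T_def)
    also have "\<dots> = sum D S"
    proof (rule sum.group[OF \<open>finite S\<close> \<open>finite T\<close>], rule image_subsetI)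
      fix J assume "J \<in> S"
      then have "J \<in> intervals P le" "interval_le le J (g c, g d)" by (simp_all add: S_def)
      then show "map_prod f f J \<in> T" by (simp add: T_def f_intervals adjoint[OF _ cd])
    qed
    also have "\<dots> = Z (g c, g d)"
      using D g_intervals[OF cd] by (simp add: mobius_inverse_def S_def)
    finally show ?thesis using Z'[OF cd] by (simp add: T_def I)
  qed
  moreover have "?D' I = 0" if "I \<notin> intervals Q le'" for I
  proof -
    have "{J \<in> intervals P le. map_prod f f J = I} = {}" using that f_intervals by blast
    then show ?thesis by (simp only: sum.empty)
  qed
  ultimately show ?thesis unfolding mobius_inverse_def by blast
qed

lemma Dgm_comp_galois_connection:
  assumes P: "finite_ranked_order P le hP" and Q: "finite_ranked_order Q le' hQ"
    and gc: "galois_connection P le Q le' f g"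
    and top: "\<And>z. z \<in> Q \<Longrightarrow> g z = topP \<longleftrightarrow> z = topQ"
  shows "Dgm k K Q le' topQ (F \<circ> g) q =
           (\<lambda>I. sum (Dgm k K P le topP F q) {J \<in> intervals P le. map_prod f f J = I})"
proof (rule Dgm_unique[OF Q], rule mobius_inverse_intervals_pushforward[OF _ _ gc])
  show "finite P" "finite Q" using P Q by (simp_all add: finite_ranked_order_finite)
  show "le' (f a) (f b)" if "a \<in> P" "b \<in> P" "le a b" for a b
    by (rule galois_connection_lower_mono[OF gc finite_ranked_order_refl[OF Q]
          finite_ranked_order_trans[OF P] that])
  show "le (g z) (g z')" if "z \<in> Q" "z' \<in> Q" "le' z z'" for z z'
    by (rule galois_connection_upper_mono[OF gc finite_ranked_order_refl[OF P]
          finite_ranked_order_trans[OF Q] that])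
  show "mobius_inverse (intervals P le) (interval_le le) (\<lambda>(c, d). int (ZB k K topP F q c d))
          (Dgm k K P le topP F q)"
    by (rule Dgm_mobius_inverse[OF P])
  show "(\<lambda>(c, d). int (ZB k K topQ (F \<circ> g) q c d)) (c, d) =
          (\<lambda>(c, d). int (ZB k K topP F q c d)) (g c, g d)"
    if "(c, d) \<in> intervals Q le'" for c d
    using that top[of d] by (simp add: intervals_def ZB_def)
qed

definition path_first_above :: "nat \<Rightarrow> (nat \<Rightarrow> nat \<times> nat) \<Rightarrow> nat \<times> nat \<Rightarrow> nat" where
  "path_first_above n p a = (LEAST i. i \<le> 2 * n \<and> grid_le a (p i))"

lemma finite_ranked_order_grid: "finite_ranked_order (grid n) grid_le (\<lambda>a. fst a + snd a)"
  unfolding finite_ranked_order_def grid_le_def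
  by (intro conjI ballI impI) (auto simp: grid_def prod_eq_iff)

lemma finite_ranked_order_atLeastAtMost: "finite_ranked_order {a..b} (\<le>) (id :: nat \<Rightarrow> nat)"
  unfolding finite_ranked_order_def by auto

lemma is_path_galois_connection:
  assumes "is_path n p"
  shows "galois_connection (grid n) grid_le {0..2*n} (\<le>) (path_first_above n p) p"
proof -
  have p_mono: "grid_le (p i) (p j)" if "i \<le> j" "j \<le> 2 * n" for i j
    using assms that unfolding is_path_def by auto
  have p_grid: "p ` {0..2*n} \<subseteq> grid n" using assms unfolding is_path_def by blast
  have first_above: "path_first_above n p a \<le> 2 * n \<and> grid_le a (p (path_first_above n p a))"
    if "a \<in> grid n" for a
  proof -
    have "2 * n \<le> 2 * n \<and> grid_le a (p (2 * n))"
      using assms that unfolding is_path_def grid_def grid_le_def by auto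
    then show ?thesis unfolding path_first_above_def by (rule LeastI)
  qed
  have "path_first_above n p a \<le> z \<longleftrightarrow> grid_le a (p z)" if "a \<in> grid n" "z \<le> 2 * n" for a z
  proof
    assume "path_first_above n p a \<le> z"
    then show "grid_le a (p z)"
      using first_above[OF that(1)] p_mono[OF _ that(2)] unfolding grid_le_def by fastforce
  next
    assume "grid_le a (p z)"
    then show "path_first_above n p a \<le> z"
      unfolding path_first_above_def using that(2) by (intro Least_le) simp
  qed
  then show ?thesis
    using first_above p_grid unfolding galois_connection_def by auto
qed

lemma is_path_eq_end_iff:
  assumes "is_path n p" "z \<le> 2 * n"
  shows "p z = (n, n) \<longleftrightarrow> z = 2 * n"
  using assms unfolding is_path_def inj_on_def by (metis atLeastAtMost_iff le0 order_refl)

theorem mainTheorem7: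
  fixes K :: "'v::linorder set set"
    and F :: "nat \<times> nat \<Rightarrow> 'v set set"
    and p :: "nat \<Rightarrow> nat \<times> nat"
    and n q x y :: nat
    and k :: "'k::field itself"
  assumes "simplicial_complex K"
    and "filtration (grid n) grid_le (0, 0) (n, n) K F"
    and "is_path n p"
    and "x \<le> y" and "y \<le> 2 * n"
  shows "let f = (\<lambda>a. LEAST i. i \<le> 2 * n \<and> grid_le a (p i)); G = F \<circ> p in
     Dgm k K {0..2*n} (\<le>) (2*n) G q (x, y) =
     (\<Sum>(a, b)\<in>{(a, b)\<in>intervals (grid n) grid_le. f a = x \<and> f b = y}.
        Dgm k K (grid n) grid_le (n, n) F q (a, b))"
proof -
  let ?f = "path_first_above n p"
  have "Dgm k K {0..2*n} (\<le>) (2*n) (F \<circ> p) q =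
          (\<lambda>I. sum (Dgm k K (grid n) grid_le (n, n) F q)
                 {J \<in> intervals (grid n) grid_le. map_prod ?f ?f J = I})"
    using finite_ranked_order_grid finite_ranked_order_atLeastAtMost
      is_path_galois_connection[OF assms(3)] is_path_eq_end_iff[OF assms(3)]
    by (rule Dgm_comp_galois_connection) simp
  moreover have "{J \<in> intervals (grid n) grid_le. map_prod ?f ?f J = (x, y)} =
                 {(a, b) \<in> intervals (grid n) grid_le. ?f a = x \<and> ?f b = y}"
    by (simp add: set_eq_iff split_def prod_eq_iff)
  moreover have "(\<lambda>a. LEAST i. i \<le> 2 * n \<and> grid_le a (p i)) = ?f"
    by (simp add: path_first_above_def fun_eq_iff)
  ultimately show ?thesis by (simp add: Let_def)
qed

end
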